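(* For all record types $\rho,\rho_1,\rho_2,\rho_3\in\mathbb{T}_R$: (1) if $\rho_1=\rho_2$ then $\mathit{lbl}(\rho_1)=\mathit{lbl}(\rho_2)$; (2) if $\mathit{lbl}(\rho_1)\cap\mathit{lbl}(\rho_2)=\emptyset$ then $\rho_1+\rho_2=\rho_1\cap\rho_2$; (3) if $\mathit{lbl}(\rho_1)\subseteq\mathit{lbl}(\rho_2)$ then $\rho_1+\rho_2=\rho_2$; (4) if $\mathit{lbl}(\rho_2)=\mathit{lbl}(\rho_3)$ then $(\rho_1+\rho_2)\cap(\rho_1+\rho_3)=\rho_1+(\rho_2\cap\rho_3)$.
   Context: $\mathbb{T}\ni\sigma ::= a\mid\omega\mid\sigma_1\to\sigma_2\mid\sigma_1\cap\sigma_2\mid\rho$ and record types $\mathbb{T}_R\ni\rho ::= \langle\rangle\mid\langle l:\sigma\rangle\mid\rho_1+\rho_2\mid\rho_1\cap\rho_2$. Subtyping $\le$ is the least preorder with: $\sigma\le\omega$; $\omega\le\omega\to\omega$; $\sigma\cap\tau\le\sigma$; $\sigma\cap\tau\le\tau$; $\sigma\le\tau_1,\sigma\le\tau_2\Rightarrow\sigma\le\tau_1\cap\tau_2$; $(\sigma\to\tau_1)\cap(\sigma\to\tau_2)\le\sigma\to\tau_1\cap\tau_2$; $\sigma_2\le\sigma_1,\tau_1\le\tau_2\Rightarrow\sigma_1\to\tau_1\le\sigma_2\to\tau_2$; $\langle l:\sigma\rangle\le\langle\rangle$; $\langle l:\sigma\rangle\cap\langle l:\tau\rangle\le\langle l:\sigma\cap\tau\rangle$;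 $\sigma\le\tau\Rightarrow\langle l:\sigma\rangle\le\langle l:\tau\rangle$; $\rho+\langle\rangle=\langle\rangle+\rho=\rho$; $(\rho_1+\rho_2)+\rho_3=\rho_1+(\rho_2+\rho_3)$; $(\rho_1\cap\rho_2)+\rho_3=(\rho_1+\rho_3)\cap(\rho_2+\rho_3)$; $\langle l:\sigma\rangle+(\langle l:\tau\rangle\cap\rho)=\langle l:\tau\rangle\cap\rho$; $\langle l:\sigma\rangle+(\langle l':\tau\rangle\cap\rho)=\langle l':\tau\rangle\cap(\langle l:\sigma\rangle+\rho)$ if $l\neq l'$; $\rho_1\le\rho_2\Rightarrow\rho_1+\rho\le\rho_2+\rho$; $\rho_1=\rho_2\Rightarrow\rho+\rho_1=\rho+\rho_2$. $=$ means $\le$ in both directions. The label map on record types: $\mathit{lbl}(\langle\rangle)=\emptyset$, $\mathit{lbl}(\langle l:\sigma\rangle)=\{l\}$, $\mathit{lbl}(\rho_1\cap\rho_2)=\mathit{lbl}(\rho_1+\rho_2)=\mathit{lbl}(\rho_1)\cup\mathit{lbl}(\rho_2)$. *)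

theory Defs
  imports Main
begin

datatype ('a, 'l) ty =
    Atom 'a
  | Omega
  | Arr "('a, 'l) ty" "('a, 'l) ty"
  | Inter "('a, 'l) ty" "('a, 'l) ty"
  | REmpty
  | RField 'l "('a, 'l) ty"
  | RMerge "('a, 'l) ty" "('a, 'l) ty"

inductive is_rec :: "('a, 'l) ty \<Rightarrow> bool" where
  "is_rec REmpty"
| "is_rec (RField l s)"
| "is_rec r1 \<Longrightarrow> is_rec r2 \<Longrightarrow> is_rec (RMerge r1 r2)"
| "is_rec r1 \<Longrightarrow> is_rec r2 \<Longrightarrow> is_rec (Inter r1 r2)"

fun lbl :: "('a, 'l) ty \<Rightarrow> 'l set" where
  "lbl REmpty = {}"
| "lbl (RField l s) = {l}"
| "lbl (Inter r1 r2) = lbl r1 \<union> lbl r2"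
| "lbl (RMerge r1 r2) = lbl r1 \<union> lbl r2"
| "lbl _ = {}"

text \<open>Subtyping: the least preorder closed under the listed rules.
Equations r = r' of the paper contribute both directions.\<close>

inductive sub :: "('a, 'l) ty \<Rightarrow> ('a, 'l) ty \<Rightarrow> bool" where
  refl: "sub s s"
| trans: "sub s t \<Longrightarrow> sub t u \<Longrightarrow> sub s u"
| omega: "sub s Omega"
| omega_arr: "sub Omega (Arr Omega Omega)"
| inter_l: "sub (Inter s t) s"
| inter_r: "sub (Inter s t) t"
| inter_glb: "sub s t1 \<Longrightarrow> sub s t2 \<Longrightarrow> sub s (Inter t1 t2)"
| arr_inter: "sub (Inter (Arr s t1) (Arr s t2)) (Arr s (Inter t1 t2))"
| arr: "sub s2 s1 \<Longrightarrow> sub t1 t2 \<Longrightarrow> sub (Arr s1 t1) (Arr s2 t2)"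
| field_empty: "sub (RField l s) REmpty"
| field_inter: "sub (Inter (RField l s) (RField l t)) (RField l (Inter s t))"
| field_mono: "sub s t \<Longrightarrow> sub (RField l s) (RField l t)"
| merge_empty_r1: "is_rec r \<Longrightarrow> sub (RMerge r REmpty) r"
| merge_empty_r2: "is_rec r \<Longrightarrow> sub r (RMerge r REmpty)"
| merge_empty_l1: "is_rec r \<Longrightarrow> sub (RMerge REmpty r) r"
| merge_empty_l2: "is_rec r \<Longrightarrow> sub r (RMerge REmpty r)"
| merge_assoc1: "is_rec r1 \<Longrightarrow> is_rec r2 \<Longrightarrow> is_rec r3 \<Longrightarrow>
    sub (RMerge (RMerge r1 r2) r3) (RMerge r1 (RMerge r2 r3))"
| merge_assoc2: "is_rec r1 \<Longrightarrow> is_rec r2 \<Longrightarrow> is_rec r3 \<Longrightarrow>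
    sub (RMerge r1 (RMerge r2 r3)) (RMerge (RMerge r1 r2) r3)"
| merge_distr1: "is_rec r1 \<Longrightarrow> is_rec r2 \<Longrightarrow> is_rec r3 \<Longrightarrow>
    sub (RMerge (Inter r1 r2) r3) (Inter (RMerge r1 r3) (RMerge r2 r3))"
| merge_distr2: "is_rec r1 \<Longrightarrow> is_rec r2 \<Longrightarrow> is_rec r3 \<Longrightarrow>
    sub (Inter (RMerge r1 r3) (RMerge r2 r3)) (RMerge (Inter r1 r2) r3)"
| merge_same1: "is_rec r \<Longrightarrow>
    sub (RMerge (RField l s) (Inter (RField l t) r)) (Inter (RField l t) r)"
| merge_same2: "is_rec r \<Longrightarrow>
    sub (Inter (RField l t) r) (RMerge (RField l s) (Inter (RField l t) r))"
| merge_diff1: "is_rec r \<Longrightarrow> l \<noteq> l' \<Longrightarrow>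
    sub (RMerge (RField l s) (Inter (RField l' t) r)) (Inter (RField l' t) (RMerge (RField l s) r))"
| merge_diff2: "is_rec r \<Longrightarrow> l \<noteq> l' \<Longrightarrow>
    sub (Inter (RField l' t) (RMerge (RField l s) r)) (RMerge (RField l s) (Inter (RField l' t) r))"
| merge_mono: "is_rec r1 \<Longrightarrow> is_rec r2 \<Longrightarrow> is_rec r \<Longrightarrow> sub r1 r2 \<Longrightarrow>
    sub (RMerge r1 r) (RMerge r2 r)"
| merge_cong1: "is_rec r1 \<Longrightarrow> is_rec r2 \<Longrightarrow> is_rec r \<Longrightarrow> sub r1 r2 \<Longrightarrow> sub r2 r1 \<Longrightarrow>
    sub (RMerge r r1) (RMerge r r2)"
| merge_cong2: "is_rec r1 \<Longrightarrow> is_rec r2 \<Longrightarrow> is_rec r \<Longrightarrow> sub r1 r2 \<Longrightarrow> sub r2 r1 \<Longrightarrow>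
    sub (RMerge r r2) (RMerge r r1)"

definition teq :: "('a, 'l) ty \<Rightarrow> ('a, 'l) ty \<Rightarrow> bool" where
  "teq s t \<longleftrightarrow> sub s t \<and> sub t s"

end

theory Submission
  imports Defs
begin

text \<open>Every record type is equivalent to a finite intersection of single fields, whose field
list can be chosen to carry exactly the labels of the type. On such normal forms the merge
\<open>\<rho>\<^sub>1 + \<rho>\<^sub>2\<close> is list override: the fields of \<open>\<rho>\<^sub>1\<close> whose label occurs in \<open>\<rho>\<^sub>2\<close> are dropped.
All four claims are then statements about lists of fields. Label invariance holds because
subtyping can only forget labels.\<close>

lemma lbl_sub: "sub s t \<Longrightarrow> lbl t \<subseteq> lbl s"
  by (induction rule: sub.induct) auto

lemma lbl_teq: "teq r1 r2 \<Longrightarrow> lbl r1 = lbl r2"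
  unfolding teq_def using lbl_sub by blast

lemma teq_refl [simp]: "teq s s"
  by (simp add: teq_def sub.refl)

lemma teq_sym: "teq s t \<Longrightarrow> teq t s"
  by (simp add: teq_def)

lemma teq_trans [trans]: "teq s t \<Longrightarrow> teq t u \<Longrightarrow> teq s u"
  unfolding teq_def by (meson sub.trans)

lemma sub_Inter_mono: "sub a a' \<Longrightarrow> sub b b' \<Longrightarrow> sub (Inter a b) (Inter a' b')"
  by (meson sub.inter_glb sub.inter_l sub.inter_r sub.trans)

lemma teq_Inter: "teq a a' \<Longrightarrow> teq b b' \<Longrightarrow> teq (Inter a b) (Inter a' b')"
  unfolding teq_def using sub_Inter_mono by blast

lemma teq_RMerge:
  "is_rec r1 \<Longrightarrow> is_rec r1' \<Longrightarrow> is_rec r2 \<Longrightarrow> is_rec r2' \<Longrightarrow>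
   teq r1 r1' \<Longrightarrow> teq r2 r2' \<Longrightarrow> teq (RMerge r1 r2) (RMerge r1' r2')"
  unfolding teq_def by (meson sub.merge_mono sub.merge_cong1 sub.trans)

fun rec_of_fields :: "('l \<times> ('a, 'l) ty) list \<Rightarrow> ('a, 'l) ty" where
  "rec_of_fields [] = REmpty"
| "rec_of_fields ((l, s) # fs) = Inter (RField l s) (rec_of_fields fs)"

definition override :: "('l \<times> 'b) list \<Rightarrow> ('l \<times> 'b) list \<Rightarrow> ('l \<times> 'b) list" where
  "override fs gs = filter (\<lambda>p. fst p \<notin> fst ` set gs) fs @ gs"

lemma fst_set_override: "fst ` set (override fs gs) = fst ` set fs \<union> fst ` set gs"
  unfolding override_def by (auto simp: image_iff)

lemma is_rec_rec_of_fields: "is_rec (rec_of_fields fs)"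
  by (induction fs rule: rec_of_fields.induct) (auto intro: is_rec.intros)

lemma rec_of_fields_sub_REmpty: "sub (rec_of_fields fs) REmpty"
  by (induction fs rule: rec_of_fields.induct) (auto intro: sub.intros)

lemma rec_of_fields_sub_RField: "(l, s) \<in> set fs \<Longrightarrow> sub (rec_of_fields fs) (RField l s)"
  by (induction fs rule: rec_of_fields.induct) (auto intro: sub.intros)

lemma sub_rec_of_fieldsI:
  "(\<And>l s. (l, s) \<in> set fs \<Longrightarrow> sub t (RField l s)) \<Longrightarrow> sub t REmpty \<Longrightarrow> sub t (rec_of_fields fs)"
  by (induction fs rule: rec_of_fields.induct) (auto intro: sub.intros)

lemma rec_of_fields_sub_subset: "set gs \<subseteq> set fs \<Longrightarrow> sub (rec_of_fields fs) (rec_of_fields gs)"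
  by (auto intro: sub_rec_of_fieldsI rec_of_fields_sub_RField rec_of_fields_sub_REmpty)

lemma teq_rec_of_fields_set: "set fs = set gs \<Longrightarrow> teq (rec_of_fields fs) (rec_of_fields gs)"
  unfolding teq_def by (simp add: rec_of_fields_sub_subset)

lemma teq_Inter_rec_of_fields:
  assumes "set hs = set fs \<union> set gs"
  shows "teq (Inter (rec_of_fields fs) (rec_of_fields gs)) (rec_of_fields hs)"
  unfolding teq_def
proof
  show "sub (Inter (rec_of_fields fs) (rec_of_fields gs)) (rec_of_fields hs)"
    using assms
    by (intro sub_rec_of_fieldsI)
       (auto intro: sub.trans[OF sub.inter_l] sub.trans[OF sub.inter_r]
                    rec_of_fields_sub_RField rec_of_fields_sub_REmpty)
  show "sub (rec_of_fields hs) (Inter (rec_of_fields fs) (rec_of_fields gs))"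
    using assms by (auto intro!: sub.inter_glb rec_of_fields_sub_subset)
qed

lemma teq_RField: "teq (RField l s) (Inter (RField l s) REmpty)"
  unfolding teq_def by (auto intro: sub.intros)

lemma teq_RMerge_RField:
  "teq (RMerge (RField l s) (rec_of_fields gs)) (rec_of_fields (override [(l, s)] gs))"
proof (induction gs)
  case Nil
  have "teq (RMerge (RField l s) REmpty) (RField l s)"
    unfolding teq_def by (auto intro: sub.intros is_rec.intros)
  then show ?case by (simp add: override_def teq_trans[OF _ teq_RField])
next
  case (Cons g gs)
  obtain l' t where g: "g = (l', t)" by (cases g)
  show ?case
  proof (cases "l = l'")
    case True
    then have "teq (RMerge (RField l s) (rec_of_fields (g # gs))) (rec_of_fields (g # gs))"
      unfolding teq_def g by (auto intro: sub.intros is_rec_rec_of_fields)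
    then show ?thesis using True by (simp add: override_def g)
  next
    case False
    have "teq (RMerge (RField l s) (rec_of_fields (g # gs)))
              (Inter (RField l' t) (RMerge (RField l s) (rec_of_fields gs)))"
      unfolding teq_def g using False
      by (auto intro: sub.merge_diff1 sub.merge_diff2 is_rec_rec_of_fields)
    also have "teq \<dots> (Inter (RField l' t) (rec_of_fields (override [(l, s)] gs)))"
      by (rule teq_Inter[OF teq_refl Cons.IH])
    also have "\<dots> = rec_of_fields (g # override [(l, s)] gs)"
      by (simp add: g)
    also have "teq \<dots> (rec_of_fields (override [(l, s)] (g # gs)))"
      using False by (intro teq_rec_of_fields_set) (auto simp: override_def g)
    finally show ?thesis .
  qed
qed

lemma teq_RMerge_rec_of_fields:
  "teq (RMerge (rec_of_fields fs) (rec_of_fields gs)) (rec_of_fields (override fs gs))"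
proof (induction fs)
  case Nil
  then show ?case
    unfolding teq_def override_def by (auto intro: sub.intros is_rec_rec_of_fields)
next
  case (Cons f fs)
  obtain l s where f: "f = (l, s)" by (cases f)
  have "teq (RMerge (rec_of_fields (f # fs)) (rec_of_fields gs))
            (Inter (RMerge (RField l s) (rec_of_fields gs)) (RMerge (rec_of_fields fs) (rec_of_fields gs)))"
    unfolding teq_def f
    by (auto intro: sub.merge_distr1 sub.merge_distr2 is_rec_rec_of_fields is_rec.intros)
  also have "teq \<dots> (Inter (rec_of_fields (override [(l, s)] gs)) (rec_of_fields (override fs gs)))"
    by (rule teq_Inter[OF teq_RMerge_RField Cons.IH])
  also have "teq \<dots> (rec_of_fields (override (f # fs) gs))"
    by (intro teq_Inter_rec_of_fields) (auto simp: override_def f)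
  finally show ?case .
qed

lemma teq_RMerge_normal:
  assumes "is_rec r1" "is_rec r2" "teq r1 (rec_of_fields fs)" "teq r2 (rec_of_fields gs)"
  shows "teq (RMerge r1 r2) (rec_of_fields (override fs gs))"
proof -
  have "teq (RMerge r1 r2) (RMerge (rec_of_fields fs) (rec_of_fields gs))"
    using assms by (intro teq_RMerge) (auto intro: is_rec_rec_of_fields)
  also have "teq \<dots> (rec_of_fields (override fs gs))"
    by (rule teq_RMerge_rec_of_fields)
  finally show ?thesis .
qed

lemma teq_Inter_normal:
  "teq r1 (rec_of_fields fs) \<Longrightarrow> teq r2 (rec_of_fields gs) \<Longrightarrow>
   teq (Inter r1 r2) (rec_of_fields (fs @ gs))"
  using teq_trans[OF teq_Inter teq_Inter_rec_of_fields[of "fs @ gs"]] by simp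

lemma rec_normal_form:
  "is_rec r \<Longrightarrow> \<exists>fs. teq r (rec_of_fields fs) \<and> fst ` set fs = lbl r"
proof (induction rule: is_rec.induct)
  case 1
  show ?case by (rule exI[of _ "[]"]) simp
next
  case (2 l s)
  show ?case by (rule exI[of _ "[(l, s)]"]) (simp add: teq_RField)
next
  case (3 r1 r2)
  then obtain fs gs where "teq r1 (rec_of_fields fs)" "fst ` set fs = lbl r1"
    and "teq r2 (rec_of_fields gs)" "fst ` set gs = lbl r2" by blast
  with 3 show ?case
    by (intro exI[of _ "override fs gs"]) (simp add: teq_RMerge_normal fst_set_override)
next
  case (4 r1 r2)
  then obtain fs gs where "teq r1 (rec_of_fields fs)" "fst ` set fs = lbl r1"
    and "teq r2 (rec_of_fields gs)" "fst ` set gs = lbl r2" by blast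
  then show ?case by (intro exI[of _ "fs @ gs"]) (auto simp: teq_Inter_normal)
qed

lemma teq_RMerge_disjoint:
  assumes "is_rec r1" "is_rec r2" "lbl r1 \<inter> lbl r2 = {}"
  shows "teq (RMerge r1 r2) (Inter r1 r2)"
proof -
  obtain fs where fs: "teq r1 (rec_of_fields fs)" "fst ` set fs = lbl r1"
    using rec_normal_form assms(1) by blast
  obtain gs where gs: "teq r2 (rec_of_fields gs)" "fst ` set gs = lbl r2"
    using rec_normal_form assms(2) by blast
  have "override fs gs = fs @ gs"
    using assms(3) fs(2) gs(2) by (auto simp: override_def intro!: filter_True)
  then have "teq (RMerge r1 r2) (rec_of_fields (fs @ gs))"
    using teq_RMerge_normal[OF assms(1,2) fs(1) gs(1)] by simp
  also have "teq \<dots> (Inter r1 r2)"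
    by (rule teq_sym[OF teq_Inter_normal[OF fs(1) gs(1)]])
  finally show ?thesis .
qed

lemma teq_RMerge_lbl_subset:
  assumes "is_rec r1" "is_rec r2" "lbl r1 \<subseteq> lbl r2"
  shows "teq (RMerge r1 r2) r2"
proof -
  obtain fs where fs: "teq r1 (rec_of_fields fs)" "fst ` set fs = lbl r1"
    using rec_normal_form assms(1) by blast
  obtain gs where gs: "teq r2 (rec_of_fields gs)" "fst ` set gs = lbl r2"
    using rec_normal_form assms(2) by blast
  have "override fs gs = gs"
    using assms(3) fs(2) gs(2) by (auto simp: override_def filter_empty_conv)
  then have "teq (RMerge r1 r2) (rec_of_fields gs)"
    using teq_RMerge_normal[OF assms(1,2) fs(1) gs(1)] by simp
  also have "teq \<dots> r2"
    by (rule teq_sym[OF gs(1)])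
  finally show ?thesis .
qed

lemma teq_Inter_RMerge_same_lbl:
  assumes "is_rec r1" "is_rec r2" "is_rec r3" "lbl r2 = lbl r3"
  shows "teq (Inter (RMerge r1 r2) (RMerge r1 r3)) (RMerge r1 (Inter r2 r3))"
proof -
  obtain fs where fs: "teq r1 (rec_of_fields fs)" "fst ` set fs = lbl r1"
    using rec_normal_form assms(1) by blast
  obtain gs where gs: "teq r2 (rec_of_fields gs)" "fst ` set gs = lbl r2"
    using rec_normal_form assms(2) by blast
  obtain hs where hs: "teq r3 (rec_of_fields hs)" "fst ` set hs = lbl r3"
    using rec_normal_form assms(3) by blast
  define fs' where "fs' = filter (\<lambda>p. fst p \<notin> lbl r2) fs"
  have override_eqs: "override fs gs = fs' @ gs" "override fs hs = fs' @ hs"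
    "override fs (gs @ hs) = fs' @ gs @ hs"
    using assms(4) gs(2) hs(2) by (simp_all add: override_def fs'_def image_Un)
  have "teq (Inter (RMerge r1 r2) (RMerge r1 r3))
            (Inter (rec_of_fields (fs' @ gs)) (rec_of_fields (fs' @ hs)))"
    using teq_Inter[OF teq_RMerge_normal[OF assms(1,2) fs(1) gs(1)]
                       teq_RMerge_normal[OF assms(1,3) fs(1) hs(1)]]
    by (simp add: override_eqs)
  also have "teq \<dots> (rec_of_fields (fs' @ gs @ hs))"
    by (rule teq_Inter_rec_of_fields) auto
  also have "teq \<dots> (RMerge r1 (Inter r2 r3))"
    using teq_RMerge_normal[OF assms(1) _ fs(1) teq_Inter_normal[OF gs(1) hs(1)]] assms(2,3)
    by (auto simp: override_eqs intro: teq_sym is_rec.intros)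
  finally show ?thesis .
qed

theorem lemma3p10:
  fixes r r1 r2 r3 :: "('a, 'l) ty"
  assumes "is_rec r" and "is_rec r1" and "is_rec r2" and "is_rec r3"
  shows "(teq r1 r2 \<longrightarrow> lbl r1 = lbl r2)
    \<and> (lbl r1 \<inter> lbl r2 = {} \<longrightarrow> teq (RMerge r1 r2) (Inter r1 r2))
    \<and> (lbl r1 \<subseteq> lbl r2 \<longrightarrow> teq (RMerge r1 r2) r2)
    \<and> (lbl r2 = lbl r3 \<longrightarrow> teq (Inter (RMerge r1 r2) (RMerge r1 r3)) (RMerge r1 (Inter r2 r3)))"
  using lbl_teq teq_RMerge_disjoint[OF assms(2,3)] teq_RMerge_lbl_subset[OF assms(2,3)]
    teq_Inter_RMerge_same_lbl[OF assms(2-4)]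
  by (intro conjI impI) simp_all

end
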